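(* Let $P_1\ge\cdots\ge P_K>0$ and let $\Lambda_1\subseteq\Lambda_2\subseteq\cdots\subseteq\Lambda_K\subseteq\Lambda_C$ be $n$-dimensional lattices, with Voronoi regions $\mathcal R_i$ of $\Lambda_i$, nearest-neighbor quantizers $Q_i$, and $\mathcal C_i=\Lambda_C\cap\mathcal R_i$. Let $\mathbf W_1,\dots,\mathbf W_K,\mathbf U_1,\dots,\mathbf U_K,\mathbf Z$ be mutually independent, with $\mathbf W_i$ uniform on $\mathcal C_i$, $\mathbf U_i$ uniform on $\mathcal R_i$, and $\mathbf Z\sim\mathcal N(\mathbf 0,\mathbf I_n)$. Put $\mathbf X_i=(\mathbf W_i+\mathbf U_i)\bmod\Lambda_i$, $\alpha=\frac{\sum_{j=1}^KP_j}{\sum_{j=1}^KP_j+1}$, $$\mathbf T=\Big[\sum_{j=1}^K\big(\mathbf W_j-Q_j(\mathbf W_j+\mathbf U_j)\big)\Big]\bmod\Lambda_1,\qquad \tilde{\mathbf Z}=-(1-\alpha)\sum_{j=1}^K\mathbf X_j+\alpha\mathbf Z.$$ Then $\mathbf T$ is uniformly distributed over $\mathcal C_1$ and independent of $\tilde{\mathbf Z}$.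
   Context: For a lattice $\Lambda\subset\mathbb R^n$: $Q(\mathbf x)=\arg\min_{\lambda\in\Lambda}\|\mathbf x-\lambda\|$ (nearest-neighbor quantizer), $\mathbf x\bmod\Lambda=\mathbf x-Q(\mathbf x)$, Voronoi region $\mathcal R=\{\mathbf x:Q(\mathbf x)=\mathbf 0\}$, ties broken arbitrarily but consistently. *)

theory Defs
  imports "HOL-Probability.Probability"
begin

definition lattice :: "'a::euclidean_space set \<Rightarrow> bool" where
  "lattice L \<longleftrightarrow> (\<exists>B. independent B \<and> card B = DIM('a) \<and>
     L = {x. \<exists>c. (\<forall>b\<in>B. c b \<in> \<int>) \<and> x = (\<Sum>b\<in>B. c b *\<^sub>R b)})"

text \<open>Q is a nearest-neighbour quantizer of L with ties broken consistently
  (i.e. compatibly with lattice translations).\<close>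
definition nn_quantizer :: "'a::euclidean_space set \<Rightarrow> ('a \<Rightarrow> 'a) \<Rightarrow> bool" where
  "nn_quantizer L Q \<longleftrightarrow>
     (\<forall>x. Q x \<in> L \<and> (\<forall>l\<in>L. norm (x - Q x) \<le> norm (x - l))) \<and>
     (\<forall>x. \<forall>l\<in>L. Q (x + l) = Q x + l)"

definition lmod :: "('a::euclidean_space \<Rightarrow> 'a) \<Rightarrow> 'a \<Rightarrow> 'a" where
  "lmod Q x = x - Q x"

definition voronoi :: "('a::euclidean_space \<Rightarrow> 'a) \<Rightarrow> 'a set" where
  "voronoi Q = {x. Q x = 0}"

definition uniform_finite_rv :: "'w measure \<Rightarrow> ('w \<Rightarrow> 'a::euclidean_space) \<Rightarrow> 'a set \<Rightarrow> bool" where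
  "uniform_finite_rv M X C \<longleftrightarrow> X \<in> borel_measurable M \<and>
     (\<forall>A\<in>sets borel. measure M (X -` A \<inter> space M) = real (card (A \<inter> C)) / real (card C))"

definition std_gauss_density :: "real^'n \<Rightarrow> ennreal" where
  "std_gauss_density x = ennreal ((2 * pi) powr (- real CARD('n) / 2) * exp (- (norm x)\<^sup>2 / 2))"

end

theory Submission
  imports Defs
begin

text \<open>Write \<open>T = (W\<^sub>1 + V) mod \<Lambda>\<^sub>1\<close>, where \<open>V = \<Sum>\<^sub>j\<^sub>\<ge>\<^sub>2 (W\<^sub>j - Q\<^sub>j(W\<^sub>j + U\<^sub>j))\<close> lies in
  \<open>\<Lambda>\<^sub>C\<close>, and \<open>Z\<^sup>~ = -(1 - \<alpha>) ((W\<^sub>1 + U\<^sub>1) mod \<Lambda>\<^sub>1) + Y\<close>, where \<open>V\<close> and \<open>Y\<close> depend only on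
  the other users and on \<open>Z\<close>. Conditionally on \<open>W\<^sub>1 = w\<close>, the crypto lemma makes
  \<open>(w + U\<^sub>1) mod \<Lambda>\<^sub>1\<close> uniform on \<open>\<R>\<^sub>1\<close> again, so together with \<open>(V, Y)\<close> it is distributed
  exactly like \<open>(U\<^sub>1, V, Y)\<close>; and for fixed \<open>V \<in> \<Lambda>\<^sub>C\<close> the map \<open>w \<mapsto> (w + V) mod \<Lambda>\<^sub>1\<close> permutes
  \<open>\<C>\<^sub>1\<close>. Averaging over the uniform \<open>W\<^sub>1\<close> gives
  \<open>P(T \<in> S, Z\<^sup>~ \<in> E) = |S \<inter> \<C>\<^sub>1| / |\<C>\<^sub>1| \<cdot> P(-(1 - \<alpha>) U\<^sub>1 + Y \<in> E)\<close>, which is both claims at once.\<close>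

section \<open>Nearest-neighbour quantizers and lattices\<close>

lemma nn_quantizer_in: "nn_quantizer L Q \<Longrightarrow> Q x \<in> L"
  unfolding nn_quantizer_def by blast

lemma nn_quantizer_add: "nn_quantizer L Q \<Longrightarrow> l \<in> L \<Longrightarrow> Q (x + l) = Q x + l"
  unfolding nn_quantizer_def by blast

lemma nn_quantizer_diff: "nn_quantizer L Q \<Longrightarrow> l \<in> L \<Longrightarrow> Q (x - l) = Q x - l"
  using nn_quantizer_add[of L Q l "x - l"] by (simp add: eq_diff_eq)

lemma lmod_diff_lattice: "nn_quantizer L Q \<Longrightarrow> l \<in> L \<Longrightarrow> lmod Q (x - l) = lmod Q x"
  unfolding lmod_def by (simp add: nn_quantizer_diff)

lemma lmod_in_voronoi: "nn_quantizer L Q \<Longrightarrow> lmod Q x \<in> voronoi Q"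
  unfolding lmod_def voronoi_def by (simp add: nn_quantizer_diff nn_quantizer_in)

lemma lmod_voronoi: "x \<in> voronoi Q \<Longrightarrow> lmod Q x = x"
  unfolding lmod_def voronoi_def by simp

lemma lattice_zero: "lattice L \<Longrightarrow> 0 \<in> L"
  unfolding lattice_def by (auto intro!: exI[of _ "\<lambda>_. 0"])

lemma lattice_diff:
  assumes "lattice L" "x \<in> L" "y \<in> L" shows "x - y \<in> L"
proof -
  from assms(1) obtain B where L: "L = {x. \<exists>c. (\<forall>b\<in>B. c b \<in> \<int>) \<and> x = (\<Sum>b\<in>B. c b *\<^sub>R b)}"
    unfolding lattice_def by blast
  from assms(2,3) obtain c d where "\<forall>b\<in>B. c b \<in> \<int>" "x = (\<Sum>b\<in>B. c b *\<^sub>R b)"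
     "\<forall>b\<in>B. d b \<in> \<int>" "y = (\<Sum>b\<in>B. d b *\<^sub>R b)" using L by blast
  then show ?thesis unfolding L
    by (auto intro!: exI[of _ "\<lambda>b. c b - d b"] simp: sum_subtractf scaleR_diff_left)
qed

lemma lattice_uminus: "lattice L \<Longrightarrow> x \<in> L \<Longrightarrow> - x \<in> L"
  using lattice_diff[of L 0 x] lattice_zero by force

lemma lattice_add: "lattice L \<Longrightarrow> x \<in> L \<Longrightarrow> y \<in> L \<Longrightarrow> x + y \<in> L"
  using lattice_diff[of L x "- y"] lattice_uminus[of L y] by force

lemma lattice_sum:
  assumes "lattice L" "\<And>i. i \<in> I \<Longrightarrow> f i \<in> L" shows "sum f I \<in> L"
  using assms(2)
  by (induction I rule: infinite_finite_induct) (simp_all add: lattice_zero lattice_add assms(1))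

lemma (in prob_space) AE_sum_in_lattice:
  assumes "lattice L" "finite I" "\<And>i. i \<in> I \<Longrightarrow> AE \<omega> in M. f i \<omega> \<in> L"
  shows "AE \<omega> in M. (\<Sum>i\<in>I. f i \<omega>) \<in> L"
proof -
  have "AE \<omega> in M. \<forall>i\<in>I. f i \<omega> \<in> L"
    using assms(2,3) by (simp add: AE_finite_all)
  then show ?thesis
    by eventually_elim (simp add: lattice_sum[OF assms(1)])
qed

lemma lattice_countable:
  assumes "lattice (L::'a::euclidean_space set)" shows "countable L"
proof -
  from assms obtain B where B: "independent B"
    and L: "L = {x. \<exists>c. (\<forall>b\<in>B. c b \<in> \<int>) \<and> x = (\<Sum>b\<in>B. c b *\<^sub>R b)}"
    unfolding lattice_def by blast
  have "L \<subseteq> (\<lambda>c. \<Sum>b\<in>B. c b *\<^sub>R b) ` (PiE B (\<lambda>_. \<int>))"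
  proof
    fix x assume "x \<in> L"
    then obtain c where c: "\<forall>b\<in>B. c b \<in> \<int>" "x = (\<Sum>b\<in>B. c b *\<^sub>R b)" using L by blast
    then have "x = (\<Sum>b\<in>B. restrict c B b *\<^sub>R b)" by (auto intro!: sum.cong)
    moreover have "restrict c B \<in> PiE B (\<lambda>_. \<int>)" using c(1) by auto
    ultimately show "x \<in> (\<lambda>c. \<Sum>b\<in>B. c b *\<^sub>R b) ` (PiE B (\<lambda>_. \<int>))" by blast
  qed
  moreover have "countable (PiE B (\<lambda>_. (\<int>::real set)))"
    using independent_bound[OF B] countable_int by (intro countable_PiE) auto
  ultimately show ?thesis by (meson countable_image countable_subset)
qed

lemma bij_betw_lmod_shift:
  assumes Q: "nn_quantizer L Q" and LC: "lattice LC" "L \<subseteq> LC" and v: "v \<in> LC"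
  shows "bij_betw (\<lambda>w. lmod Q (w + v)) (LC \<inter> voronoi Q) (LC \<inter> voronoi Q)"
proof (rule bij_betw_byWitness[where f'="\<lambda>w. lmod Q (w - v)"])
  have lmod_LC: "lmod Q x \<in> LC" if "x \<in> LC" for x
    using lattice_diff[OF LC(1) that] nn_quantizer_in[OF Q] LC(2) unfolding lmod_def by blast
  have "lmod Q (w + v) - v = w - Q (w + v)" "lmod Q (w - v) + v = w - Q (w - v)" for w
    unfolding lmod_def by simp_all
  then have "lmod Q (lmod Q (w + v) - v) = lmod Q w" "lmod Q (lmod Q (w - v) + v) = lmod Q w" for w
    using lmod_diff_lattice[OF Q nn_quantizer_in[OF Q]] by simp_all
  then show "\<forall>w\<in>LC \<inter> voronoi Q. lmod Q (lmod Q (w + v) - v) = w"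
    "\<forall>w\<in>LC \<inter> voronoi Q. lmod Q (lmod Q (w - v) + v) = w"
    by (simp_all add: lmod_voronoi)
  show "(\<lambda>w. lmod Q (w + v)) ` (LC \<inter> voronoi Q) \<subseteq> LC \<inter> voronoi Q"
    "(\<lambda>w. lmod Q (w - v)) ` (LC \<inter> voronoi Q) \<subseteq> LC \<inter> voronoi Q"
    using v lmod_LC lattice_add[OF LC(1)] lattice_diff[OF LC(1)] lmod_in_voronoi[OF Q] by auto
qed

lemma subset_chain_le:
  assumes "\<And>i. 1 \<le> i \<Longrightarrow> i < K \<Longrightarrow> L i \<subseteq> L (Suc i)" "1 \<le> j" "j \<le> K"
  shows "L j \<subseteq> L K"
  using assms(3)
proof (induction j rule: inc_induct)
  case (step n)
  then show ?case using assms(1)[of n] assms(2) by auto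
qed simp

lemma sum_atLeast1_split: "1 \<le> (K::nat) \<Longrightarrow> (\<Sum>j=1..K. f j) = f 1 + (\<Sum>j=2..K. f j)"
  using sum.atLeast_Suc_atMost[of 1 K f] by (simp add: numeral_2_eq_2)

lemma lmod_sum_first:
  fixes Q :: "nat \<Rightarrow> 'a::euclidean_space \<Rightarrow> 'a"
  assumes "nn_quantizer L (Q 1)" "1 \<le> K"
  shows "lmod (Q 1) (\<Sum>j=1..K. w j - Q j (w j + u j)) = lmod (Q 1) (w 1 + (\<Sum>j=2..K. w j - Q j (w j + u j)))"
proof -
  have "(\<Sum>j=1..K. w j - Q j (w j + u j)) = (w 1 + (\<Sum>j=2..K. w j - Q j (w j + u j))) - Q 1 (w 1 + u 1)"
    using sum_atLeast1_split[OF assms(2), of "\<lambda>j. w j - Q j (w j + u j)"] by simp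
  then show ?thesis
    using lmod_diff_lattice[OF assms(1) nn_quantizer_in[OF assms(1)]] by simp
qed

section \<open>The crypto lemma\<close>

lemma emeasure_voronoi_lmod_shift:
  fixes Q :: "'a::euclidean_space \<Rightarrow> 'a"
  assumes Q: "nn_quantizer L Q" and Q_borel[measurable]: "Q \<in> borel_measurable borel"
    and L: "lattice L" and A[measurable]: "A \<in> sets borel"
  shows "emeasure lborel ({x. lmod Q (w + x) \<in> A} \<inter> voronoi Q) = emeasure lborel (A \<inter> voronoi Q)"
proof -
  \<comment> \<open>Split both sides according to the lattice point \<open>l = Q (w + x)\<close>; the pieces are
    translates of each other by \<open>l - w\<close>.\<close>
  define F where "F l = {x. Q x = 0 \<and> Q (w + x) = l \<and> w + x - l \<in> A}" for l
  define G where "G l = {y. y \<in> A \<and> Q y = 0 \<and> Q (y - w) = - l}" for l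
  have [measurable]: "F l \<in> sets borel" "G l \<in> sets borel" for l
    unfolding F_def G_def by measurable
  have "{x. lmod Q (w + x) \<in> A} \<inter> voronoi Q = (\<Union>l\<in>L. F l)"
    unfolding F_def voronoi_def lmod_def using nn_quantizer_in[OF Q] by auto
  moreover have "A \<inter> voronoi Q = (\<Union>l\<in>L. G l)"
    unfolding G_def voronoi_def using lattice_uminus[OF L nn_quantizer_in[OF Q]] by force
  moreover have "emeasure lborel (F l) = emeasure lborel (G l)" if l: "l \<in> L" for l
  proof -
    have shift: "w - l + x = w + x - l" "w + x - l - w = x - l" for x
      by (simp_all add: algebra_simps)
    have "F l = (+) (w - l) -` G l"
      unfolding F_def G_def vimage_def mem_Collect_eq shift nn_quantizer_diff[OF Q l] by auto
    moreover have "emeasure lborel (G l) = emeasure (distr lborel borel ((+) (w - l))) (G l)"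
      by (simp add: lborel_distr_plus)
    ultimately show ?thesis
      by (simp add: emeasure_distr)
  qed
  moreover have "disjoint_family_on F L" "disjoint_family_on G L"
    unfolding disjoint_family_on_def F_def G_def by auto
  ultimately show ?thesis
    using lattice_countable[OF L]
    by (simp add: emeasure_UN_countable) (rule nn_integral_cong, simp)
qed

lemma (in prob_space) distr_lmod_shift_uniform_voronoi:
  fixes U :: "'a \<Rightarrow> 'b::euclidean_space"
  assumes Q: "nn_quantizer L Q" "Q \<in> borel_measurable borel" "lattice L"
    and U[measurable]: "U \<in> borel_measurable M"
    and U_unif: "distr M lborel U = uniform_measure lborel (voronoi Q)"
  shows "distr M borel (\<lambda>\<omega>. lmod Q (w + U \<omega>)) = distr M borel U"
proof (rule measure_eqI)
  fix A assume "A \<in> sets (distr M borel (\<lambda>\<omega>. lmod Q (w + U \<omega>)))"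
  then have A[measurable]: "A \<in> sets borel" by simp
  have [measurable]: "lmod Q \<in> borel_measurable borel" "voronoi Q \<in> sets borel"
    using Q(2) unfolding lmod_def voronoi_def by measurable
  have U_distr: "distr M borel U = uniform_measure lborel (voronoi Q)"
    using U_unif by (simp add: distr_def)
  have "emeasure (distr M borel (\<lambda>\<omega>. lmod Q (w + U \<omega>))) A
      = emeasure (distr M borel U) {x. lmod Q (w + x) \<in> A}"
    by (simp add: emeasure_distr vimage_def Int_def)
  also have "\<dots> = emeasure lborel ({x. lmod Q (w + x) \<in> A} \<inter> voronoi Q) / emeasure lborel (voronoi Q)"
    unfolding U_distr by (simp add: Int_commute)
  also have "\<dots> = emeasure (distr M borel U) A"
    unfolding U_distr emeasure_voronoi_lmod_shift[OF Q(1,2,3) A] by (simp add: Int_commute)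
  finally show "emeasure (distr M borel (\<lambda>\<omega>. lmod Q (w + U \<omega>))) A = emeasure (distr M borel U) A" .
qed simp

section \<open>Independence of random variables with values in different spaces\<close>

text \<open>\<open>indep_var\<close> forces both random variables to have the same type; this is its
  counterpart for variables with values in different spaces.\<close>
definition (in prob_space) indep_rvs :: "'b measure \<Rightarrow> ('a \<Rightarrow> 'b) \<Rightarrow> 'c measure \<Rightarrow> ('a \<Rightarrow> 'c) \<Rightarrow> bool"
  where "indep_rvs S X T Y \<longleftrightarrow> random_variable S X \<and> random_variable T Y \<and>
    (\<forall>A\<in>sets S. \<forall>B\<in>sets T. prob {\<omega>\<in>space M. X \<omega> \<in> A \<and> Y \<omega> \<in> B}
        = prob {\<omega>\<in>space M. X \<omega> \<in> A} * prob {\<omega>\<in>space M. Y \<omega> \<in> B})"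

lemma (in prob_space) distr_pair_indep_rvs:
  assumes "indep_rvs S X T Y"
  shows "distr M (S \<Otimes>\<^sub>M T) (\<lambda>\<omega>. (X \<omega>, Y \<omega>)) = distr M S X \<Otimes>\<^sub>M distr M T Y"
proof (rule pair_measure_eqI[symmetric])
  have X: "random_variable S X" and Y: "random_variable T Y"
    using assms unfolding indep_rvs_def by blast+
  show "sigma_finite_measure (distr M S X)" "sigma_finite_measure (distr M T Y)"
    using prob_space_distr[OF X] prob_space_distr[OF Y] by (simp_all add: prob_space_imp_sigma_finite)
  fix A B assume "A \<in> sets (distr M S X)" "B \<in> sets (distr M T Y)"
  then have [measurable]: "A \<in> sets S" "B \<in> sets T" by auto
  have "(\<lambda>\<omega>. (X \<omega>, Y \<omega>)) -` (A \<times> B) \<inter> space M = {\<omega>\<in>space M. X \<omega> \<in> A \<and> Y \<omega> \<in> B}"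
    "X -` A \<inter> space M = {\<omega>\<in>space M. X \<omega> \<in> A}" "Y -` B \<inter> space M = {\<omega>\<in>space M. Y \<omega> \<in> B}"
    by auto
  then show "emeasure (distr M S X) A * emeasure (distr M T Y) B
      = emeasure (distr M (S \<Otimes>\<^sub>M T) (\<lambda>\<omega>. (X \<omega>, Y \<omega>))) (A \<times> B)"
    using X Y assms by (simp add: indep_rvs_def emeasure_distr emeasure_eq_measure ennreal_mult)
qed simp

lemma (in prob_space) indep_var_iff_indep_rvs: "indep_var S X T Y \<longleftrightarrow> indep_rvs S X T Y"
proof
  assume ind: "indep_var S X T Y"
  have "indep_set (sigma_sets (space M) {X -` A \<inter> space M | A. A \<in> sets S})
      (sigma_sets (space M) {Y -` A \<inter> space M | A. A \<in> sets T})"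
    using ind unfolding indep_var_eq by blast
  then have "prob ((X -` A \<inter> space M) \<inter> (Y -` B \<inter> space M))
      = prob (X -` A \<inter> space M) * prob (Y -` B \<inter> space M)" if "A \<in> sets S" "B \<in> sets T" for A B
    using that unfolding indep_sets2_eq by (blast intro: sigma_sets.Basic)
  moreover have "{\<omega>\<in>space M. X \<omega> \<in> A \<and> Y \<omega> \<in> B} = (X -` A \<inter> space M) \<inter> (Y -` B \<inter> space M)"
    "{\<omega>\<in>space M. X \<omega> \<in> A} = X -` A \<inter> space M" "{\<omega>\<in>space M. Y \<omega> \<in> B} = Y -` B \<inter> space M"
    for A B by auto
  ultimately show "indep_rvs S X T Y"
    using ind unfolding indep_rvs_def by (auto dest: indep_var_rv1 indep_var_rv2)
next
  assume ind: "indep_rvs S X T Y"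
  then have "random_variable S X" "random_variable T Y"
    unfolding indep_rvs_def by blast+
  then show "indep_var S X T Y"
    unfolding indep_var_distribution_eq using distr_pair_indep_rvs[OF ind] by simp
qed

lemma (in prob_space) indep_rvs_compose:
  assumes ind: "indep_rvs S X T Y" and f: "f \<in> measurable S S'" and h: "h \<in> measurable T T'"
  shows "indep_rvs S' (\<lambda>\<omega>. f (X \<omega>)) T' (\<lambda>\<omega>. h (Y \<omega>))"
  unfolding indep_rvs_def
proof (intro conjI ballI)
  have X: "random_variable S X" and Y: "random_variable T Y"
    and rect: "\<And>A B. A \<in> sets S \<Longrightarrow> B \<in> sets T \<Longrightarrow> prob {\<omega>\<in>space M. X \<omega> \<in> A \<and> Y \<omega> \<in> B}
        = prob {\<omega>\<in>space M. X \<omega> \<in> A} * prob {\<omega>\<in>space M. Y \<omega> \<in> B}"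
    using ind unfolding indep_rvs_def by blast+
  show "random_variable S' (\<lambda>\<omega>. f (X \<omega>))" "random_variable T' (\<lambda>\<omega>. h (Y \<omega>))"
    using measurable_compose[OF X f] measurable_compose[OF Y h] .
  fix A B assume "A \<in> sets S'" "B \<in> sets T'"
  then have "prob {\<omega>\<in>space M. X \<omega> \<in> f -` A \<inter> space S \<and> Y \<omega> \<in> h -` B \<inter> space T}
      = prob {\<omega>\<in>space M. X \<omega> \<in> f -` A \<inter> space S} * prob {\<omega>\<in>space M. Y \<omega> \<in> h -` B \<inter> space T}"
    using f h by (intro rect) (auto simp: measurable_sets)
  moreover have "{\<omega>\<in>space M. f (X \<omega>) \<in> A} = {\<omega>\<in>space M. X \<omega> \<in> f -` A \<inter> space S}"
    "{\<omega>\<in>space M. h (Y \<omega>) \<in> B} = {\<omega>\<in>space M. Y \<omega> \<in> h -` B \<inter> space T}"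
    "{\<omega>\<in>space M. f (X \<omega>) \<in> A \<and> h (Y \<omega>) \<in> B}
      = {\<omega>\<in>space M. X \<omega> \<in> f -` A \<inter> space S \<and> Y \<omega> \<in> h -` B \<inter> space T}"
    using measurable_space[OF X] measurable_space[OF Y] by auto
  ultimately show "prob {\<omega>\<in>space M. f (X \<omega>) \<in> A \<and> h (Y \<omega>) \<in> B}
      = prob {\<omega>\<in>space M. f (X \<omega>) \<in> A} * prob {\<omega>\<in>space M. h (Y \<omega>) \<in> B}"
    by simp
qed

lemma (in prob_space) indep_vars_indep_rvs_two_and_rest:
  assumes ind: "indep_vars (\<lambda>_. N) X J" and ab: "a \<in> J" "b \<in> J" "a \<noteq> b"
    and R: "R \<subseteq> J - {a, b}" and F: "F \<in> measurable (PiM R (\<lambda>_. N)) T"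
  shows "indep_rvs N (X a) (N \<Otimes>\<^sub>M T) (\<lambda>\<omega>. (X b \<omega>, F (\<lambda>i\<in>R. X i \<omega>)))"
    "indep_rvs N (X b) T (\<lambda>\<omega>. F (\<lambda>i\<in>R. X i \<omega>))"
proof -
  have restrict: "indep_rvs (PiM A (\<lambda>_. N)) (\<lambda>\<omega>. \<lambda>i\<in>A. X i \<omega>) (PiM B (\<lambda>_. N)) (\<lambda>\<omega>. \<lambda>i\<in>B. X i \<omega>)"
    if "A \<subseteq> J" "B \<subseteq> J" "A \<inter> B = {}" for A B
    unfolding indep_var_iff_indep_rvs[symmetric] using ind that by (intro indep_var_restrict) auto
  have sub: "{a} \<subseteq> J" "insert b R \<subseteq> J" "{a} \<inter> insert b R = {}" "{b} \<subseteq> J" "R \<subseteq> J" "{b} \<inter> R = {}"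
    using ab R by auto
  have "(\<lambda>x. (x b, F (restrict x R))) \<in> measurable (PiM (insert b R) (\<lambda>_. N)) (N \<Otimes>\<^sub>M T)"
    by (intro measurable_Pair measurable_component_singleton
        measurable_compose[OF measurable_restrict_subset F]) auto
  from indep_rvs_compose[OF restrict[OF sub(1-3)] measurable_component_singleton this]
  show "indep_rvs N (X a) (N \<Otimes>\<^sub>M T) (\<lambda>\<omega>. (X b \<omega>, F (\<lambda>i\<in>R. X i \<omega>)))"
    by (simp add: Int_absorb1 subset_insertI)
  from indep_rvs_compose[OF restrict[OF sub(4-6)] measurable_component_singleton F]
  show "indep_rvs N (X b) T (\<lambda>\<omega>. F (\<lambda>i\<in>R. X i \<omega>))"
    by simp
qed

lemma (in prob_space) uniform_finite_rv_support:
  assumes "uniform_finite_rv M X C"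
  shows "finite C" "C \<noteq> {}" "AE \<omega> in M. X \<omega> \<in> C"
proof -
  have prob_X: "prob (X -` A \<inter> space M) = real (card (A \<inter> C)) / real (card C)" if "A \<in> sets borel" for A
    using assms that unfolding uniform_finite_rv_def by blast
  \<comment> \<open>if \<open>C\<close> were infinite or empty, every probability would be \<open>x / 0 = 0\<close>\<close>
  from prob_X[of UNIV] have "card C \<noteq> 0" by (auto simp: prob_space split: if_splits)
  then show C: "finite C" "C \<noteq> {}" using card_ge_0_finite by auto
  then have "prob (X -` C \<inter> space M) = 1"
    using prob_X[OF borel_closed[OF finite_imp_closed]] by simp
  then show "AE \<omega> in M. X \<omega> \<in> C"
    by (auto dest: AE_prob_1)
qed

lemma (in prob_space) prob_uniform_finite_indep_pair:
  assumes W: "uniform_finite_rv M W C" and ind: "indep_rvs borel W N X"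
    and D[measurable]: "D \<in> sets (borel \<Otimes>\<^sub>M N)"
  shows "prob {\<omega>\<in>space M. (W \<omega>, X \<omega>) \<in> D} = (\<Sum>w\<in>C. prob {\<omega>\<in>space M. (w, X \<omega>) \<in> D}) / card C"
proof -
  have [measurable]: "W \<in> borel_measurable M" "X \<in> measurable M N"
    using ind unfolding indep_rvs_def by blast+
  have C: "finite C" "AE \<omega> in M. W \<omega> \<in> C"
    using uniform_finite_rv_support[OF W] by auto
  have prob_W: "prob {\<omega>\<in>space M. W \<omega> \<in> {w}} = 1 / card C" if "w \<in> C" for w
  proof -
    have "prob (W -` {w} \<inter> space M) = real (card ({w} \<inter> C)) / card C"
      using W unfolding uniform_finite_rv_def by simp
    moreover have "{\<omega>\<in>space M. W \<omega> \<in> {w}} = W -` {w} \<inter> space M" by auto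
    ultimately show ?thesis using that by simp
  qed
  have "prob {\<omega>\<in>space M. (W \<omega>, X \<omega>) \<in> D} = prob (\<Union>w\<in>C. {\<omega>\<in>space M. W \<omega> \<in> {w} \<and> X \<omega> \<in> Pair w -` D})"
    using C by (intro measure_eq_AE) (auto intro!: sets.finite_UN)
  also have "\<dots> = (\<Sum>w\<in>C. prob {\<omega>\<in>space M. W \<omega> \<in> {w} \<and> X \<omega> \<in> Pair w -` D})"
    using C by (intro measure_finite_Union) (auto simp: disjoint_family_on_def)
  also have "\<dots> = (\<Sum>w\<in>C. prob {\<omega>\<in>space M. (w, X \<omega>) \<in> D} / card C)"
  proof (intro sum.cong refl)
    fix w assume w: "w \<in> C"
    have "prob {\<omega>\<in>space M. W \<omega> \<in> {w} \<and> X \<omega> \<in> Pair w -` D}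
        = prob {\<omega>\<in>space M. W \<omega> \<in> {w}} * prob {\<omega>\<in>space M. X \<omega> \<in> Pair w -` D}"
      using ind sets_Pair1[OF D] borel_singleton[OF sets.empty_sets, of w]
      unfolding indep_rvs_def by blast
    then show "prob {\<omega>\<in>space M. W \<omega> \<in> {w} \<and> X \<omega> \<in> Pair w -` D}
        = prob {\<omega>\<in>space M. (w, X \<omega>) \<in> D} / card C"
      using prob_W[OF w] by simp
  qed
  finally show ?thesis
    by (simp add: sum_divide_distrib)
qed

lemma (in prob_space) distr_pair_eq_if_indep_distr_eq:
  assumes ind: "indep_rvs S U T X" and f: "f \<in> measurable S S"
    and f_U: "distr M S (\<lambda>\<omega>. f (U \<omega>)) = distr M S U"
  shows "distr M (S \<Otimes>\<^sub>M T) (\<lambda>\<omega>. (f (U \<omega>), X \<omega>)) = distr M (S \<Otimes>\<^sub>M T) (\<lambda>\<omega>. (U \<omega>, X \<omega>))"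
  using distr_pair_indep_rvs[OF ind] distr_pair_indep_rvs[OF indep_rvs_compose[OF ind f measurable_ident_sets[OF refl]]] f_U
  by simp

lemma (in prob_space) sum_prob_bij_betw_Int:
  assumes C: "finite C" and bij: "AE \<omega> in M. bij_betw (\<lambda>w. h w \<omega>) C C"
    and h: "\<And>w. {\<omega>\<in>space M. h w \<omega> \<in> S} \<in> events" and F: "F \<in> events"
  shows "(\<Sum>w\<in>C. prob ({\<omega>\<in>space M. h w \<omega> \<in> S} \<inter> F)) = card (S \<inter> C) * prob F"
proof -
  have count: "AE \<omega> in M. (\<Sum>w\<in>C. indicator ({\<omega>\<in>space M. h w \<omega> \<in> S} \<inter> F) \<omega>)
      = real (card (S \<inter> C)) * indicator F \<omega>"
    using bij
  proof eventually_elim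
    case (elim \<omega>)
    have "(\<Sum>w\<in>C. indicator ({\<omega>\<in>space M. h w \<omega> \<in> S} \<inter> F) \<omega>)
        = (\<Sum>w\<in>C. indicator S (h w \<omega>)) * (indicator F \<omega> :: real)"
      using sets.sets_into_space[OF F]
      by (auto simp: sum_distrib_right indicator_def intro!: sum.cong)
    also have "(\<Sum>w\<in>C. indicator S (h w \<omega>)) = (\<Sum>u\<in>C. indicator S u :: real)"
      using sum.reindex_bij_betw[OF elim] .
    also have "\<dots> = card (S \<inter> C)"
      using C by (simp add: indicator_def sum.If_cases Int_commute)
    finally show ?case .
  qed
  have "(\<Sum>w\<in>C. prob ({\<omega>\<in>space M. h w \<omega> \<in> S} \<inter> F))
      = (\<integral>\<omega>. (\<Sum>w\<in>C. indicator ({\<omega>\<in>space M. h w \<omega> \<in> S} \<inter> F) \<omega>) \<partial>M)"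
    using h F by (subst Bochner_Integration.integral_sum) (auto simp: emeasure_eq_measure)
  also have "\<dots> = (\<integral>\<omega>. real (card (S \<inter> C)) * indicator F \<omega> \<partial>M)"
    using count h F by (intro integral_cong_AE) auto
  also have "\<dots> = card (S \<inter> C) * prob F"
    using F by simp
  finally show ?thesis .
qed

context prob_space
begin

text \<open>\<open>W\<close>, \<open>U\<close> play the roles of \<open>W\<^sub>1\<close>, \<open>U\<^sub>1\<close>; \<open>V\<close> collects the lattice points contributed by
  the other users and \<open>Y\<close> everything else that enters \<open>Z\<^sup>~\<close>.\<close>
context
  fixes Q :: "'b::euclidean_space \<Rightarrow> 'b" and L LC :: "'b set"
    and W U V :: "'a \<Rightarrow> 'b" and Y :: "'a \<Rightarrow> 'c" and N :: "'c measure"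
  assumes Q: "nn_quantizer L Q" and Q_borel[measurable]: "Q \<in> borel_measurable borel"
    and L: "lattice L" and LC: "lattice LC" "L \<subseteq> LC"
    and W_unif: "uniform_finite_rv M W (LC \<inter> voronoi Q)"
    and U_unif: "distr M lborel U = uniform_measure lborel (voronoi Q)"
    and W_indep: "indep_rvs borel W (borel \<Otimes>\<^sub>M (borel \<Otimes>\<^sub>M N)) (\<lambda>\<omega>. (U \<omega>, V \<omega>, Y \<omega>))"
    and U_indep: "indep_rvs borel U (borel \<Otimes>\<^sub>M N) (\<lambda>\<omega>. (V \<omega>, Y \<omega>))"
    and V_LC: "AE \<omega> in M. V \<omega> \<in> LC"
begin

lemma dither_random_variables[measurable]:
  "W \<in> borel_measurable M" "U \<in> borel_measurable M" "V \<in> borel_measurable M" "Y \<in> measurable M N"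
proof -
  have VY: "(\<lambda>\<omega>. (V \<omega>, Y \<omega>)) \<in> measurable M (borel \<Otimes>\<^sub>M N)"
    using U_indep unfolding indep_rvs_def by blast
  show "W \<in> borel_measurable M" "U \<in> borel_measurable M"
    using W_indep U_indep unfolding indep_rvs_def by blast+
  show "V \<in> borel_measurable M" "Y \<in> measurable M N"
    using measurable_compose[OF VY measurable_fst] measurable_compose[OF VY measurable_snd] by simp_all
qed

lemma prob_lmod_shift_dither:
  assumes [measurable]: "S \<in> sets borel" "E \<in> sets (borel \<Otimes>\<^sub>M N)"
  shows "prob {\<omega>\<in>space M. lmod Q (w + V \<omega>) \<in> S \<and> (lmod Q (w + U \<omega>), Y \<omega>) \<in> E}
       = prob {\<omega>\<in>space M. lmod Q (w + V \<omega>) \<in> S \<and> (U \<omega>, Y \<omega>) \<in> E}"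
proof -
  have [measurable]: "lmod Q \<in> borel_measurable borel"
    unfolding lmod_def by measurable
  define D where "D = {x \<in> space (borel \<Otimes>\<^sub>M (borel \<Otimes>\<^sub>M N)).
    lmod Q (w + fst (snd x)) \<in> S \<and> (fst x, snd (snd x)) \<in> E}"
  have [measurable]: "D \<in> sets (borel \<Otimes>\<^sub>M (borel \<Otimes>\<^sub>M N))"
    unfolding D_def by measurable
  have "distr M (borel \<Otimes>\<^sub>M (borel \<Otimes>\<^sub>M N)) (\<lambda>\<omega>. (lmod Q (w + U \<omega>), V \<omega>, Y \<omega>))
      = distr M (borel \<Otimes>\<^sub>M (borel \<Otimes>\<^sub>M N)) (\<lambda>\<omega>. (U \<omega>, V \<omega>, Y \<omega>))"
    using distr_lmod_shift_uniform_voronoi[OF Q Q_borel L _ U_unif]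
    by (intro distr_pair_eq_if_indep_distr_eq[OF U_indep]) auto
  then have "measure M ((\<lambda>\<omega>. (lmod Q (w + U \<omega>), V \<omega>, Y \<omega>)) -` D \<inter> space M)
      = measure M ((\<lambda>\<omega>. (U \<omega>, V \<omega>, Y \<omega>)) -` D \<inter> space M)"
    using measure_distr[of "\<lambda>\<omega>. (lmod Q (w + U \<omega>), V \<omega>, Y \<omega>)" M "borel \<Otimes>\<^sub>M (borel \<Otimes>\<^sub>M N)" D]
      measure_distr[of "\<lambda>\<omega>. (U \<omega>, V \<omega>, Y \<omega>)" M "borel \<Otimes>\<^sub>M (borel \<Otimes>\<^sub>M N)" D]
    by simp
  moreover have "(\<lambda>\<omega>. (lmod Q (w + U \<omega>), V \<omega>, Y \<omega>)) -` D \<inter> space M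
      = {\<omega>\<in>space M. lmod Q (w + V \<omega>) \<in> S \<and> (lmod Q (w + U \<omega>), Y \<omega>) \<in> E}"
    "(\<lambda>\<omega>. (U \<omega>, V \<omega>, Y \<omega>)) -` D \<inter> space M
      = {\<omega>\<in>space M. lmod Q (w + V \<omega>) \<in> S \<and> (U \<omega>, Y \<omega>) \<in> E}"
    using measurable_space[OF dither_random_variables(4)]
    by (auto simp: D_def space_pair_measure)
  ultimately show ?thesis by simp
qed

lemma prob_lmod_dither_joint:
  assumes [measurable]: "S \<in> sets borel" "E \<in> sets (borel \<Otimes>\<^sub>M N)"
  shows "prob {\<omega>\<in>space M. lmod Q (W \<omega> + V \<omega>) \<in> S \<and> (lmod Q (W \<omega> + U \<omega>), Y \<omega>) \<in> E}
       = card (S \<inter> (LC \<inter> voronoi Q)) / card (LC \<inter> voronoi Q) * prob {\<omega>\<in>space M. (U \<omega>, Y \<omega>) \<in> E}"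
proof -
  let ?C = "LC \<inter> voronoi Q"
  have [measurable]: "lmod Q \<in> borel_measurable borel"
    unfolding lmod_def by measurable
  define D where "D = {x \<in> space (borel \<Otimes>\<^sub>M (borel \<Otimes>\<^sub>M (borel \<Otimes>\<^sub>M N))).
    lmod Q (fst x + fst (snd (snd x))) \<in> S \<and> (lmod Q (fst x + fst (snd x)), snd (snd (snd x))) \<in> E}"
  have [measurable]: "D \<in> sets (borel \<Otimes>\<^sub>M (borel \<Otimes>\<^sub>M (borel \<Otimes>\<^sub>M N)))"
    unfolding D_def by measurable
  have Y_space: "Y \<omega> \<in> space N" if "\<omega> \<in> space M" for \<omega>
    using measurable_space[OF dither_random_variables(4) that] .
  have "prob {\<omega>\<in>space M. lmod Q (W \<omega> + V \<omega>) \<in> S \<and> (lmod Q (W \<omega> + U \<omega>), Y \<omega>) \<in> E}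
      = prob {\<omega>\<in>space M. (W \<omega>, U \<omega>, V \<omega>, Y \<omega>) \<in> D}"
    using Y_space by (auto simp: D_def space_pair_measure intro!: arg_cong[where f=prob])
  also have "\<dots> = (\<Sum>w\<in>?C. prob {\<omega>\<in>space M. (w, U \<omega>, V \<omega>, Y \<omega>) \<in> D}) / card ?C"
    by (rule prob_uniform_finite_indep_pair[OF W_unif W_indep]) measurable
  also have "(\<Sum>w\<in>?C. prob {\<omega>\<in>space M. (w, U \<omega>, V \<omega>, Y \<omega>) \<in> D})
      = (\<Sum>w\<in>?C. prob ({\<omega>\<in>space M. lmod Q (w + V \<omega>) \<in> S} \<inter> {\<omega>\<in>space M. (U \<omega>, Y \<omega>) \<in> E}))"
  proof (intro sum.cong refl)
    fix w
    have "{\<omega>\<in>space M. (w, U \<omega>, V \<omega>, Y \<omega>) \<in> D}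
        = {\<omega>\<in>space M. lmod Q (w + V \<omega>) \<in> S \<and> (lmod Q (w + U \<omega>), Y \<omega>) \<in> E}"
      "{\<omega>\<in>space M. lmod Q (w + V \<omega>) \<in> S} \<inter> {\<omega>\<in>space M. (U \<omega>, Y \<omega>) \<in> E}
        = {\<omega>\<in>space M. lmod Q (w + V \<omega>) \<in> S \<and> (U \<omega>, Y \<omega>) \<in> E}"
      using Y_space by (auto simp: D_def space_pair_measure)
    then show "prob {\<omega>\<in>space M. (w, U \<omega>, V \<omega>, Y \<omega>) \<in> D}
        = prob ({\<omega>\<in>space M. lmod Q (w + V \<omega>) \<in> S} \<inter> {\<omega>\<in>space M. (U \<omega>, Y \<omega>) \<in> E})"
      using prob_lmod_shift_dither by simp
  qed
  also have "\<dots> = card (S \<inter> ?C) * prob {\<omega>\<in>space M. (U \<omega>, Y \<omega>) \<in> E}"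
  proof (rule sum_prob_bij_betw_Int)
    show "finite ?C"
      using uniform_finite_rv_support(1)[OF W_unif] .
    show "AE \<omega> in M. bij_betw (\<lambda>w. lmod Q (w + V \<omega>)) ?C ?C"
      using V_LC by eventually_elim (rule bij_betw_lmod_shift[OF Q LC])
  qed measurable
  finally show ?thesis
    by simp
qed

lemma lmod_dither_uniform_indep:
  "uniform_finite_rv M (\<lambda>\<omega>. lmod Q (W \<omega> + V \<omega>)) (LC \<inter> voronoi Q) \<and>
   indep_rvs borel (\<lambda>\<omega>. lmod Q (W \<omega> + V \<omega>)) (borel \<Otimes>\<^sub>M N) (\<lambda>\<omega>. (lmod Q (W \<omega> + U \<omega>), Y \<omega>))"
proof -
  let ?C = "LC \<inter> voronoi Q"
  have [measurable]: "lmod Q \<in> borel_measurable borel"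
    unfolding lmod_def by measurable
  have C: "finite ?C" "?C \<noteq> {}"
    using uniform_finite_rv_support[OF W_unif] by auto
  have Y_space: "Y \<omega> \<in> space N" if "\<omega> \<in> space M" for \<omega>
    using measurable_space[OF dither_random_variables(4) that] .
  have prob_T: "prob {\<omega>\<in>space M. lmod Q (W \<omega> + V \<omega>) \<in> S} = card (S \<inter> ?C) / card ?C"
    if [measurable]: "S \<in> sets borel" for S
  proof -
    have "{\<omega>\<in>space M. lmod Q (W \<omega> + V \<omega>) \<in> S \<and> Y \<omega> \<in> space N} = {\<omega>\<in>space M. lmod Q (W \<omega> + V \<omega>) \<in> S}"
      "{\<omega>\<in>space M. Y \<omega> \<in> space N} = space M"
      using Y_space by auto
    then show ?thesis
      using prob_lmod_dither_joint[of S "space (borel \<Otimes>\<^sub>M N)"] by (simp add: space_pair_measure prob_space)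
  qed
  have prob_dither: "prob {\<omega>\<in>space M. (lmod Q (W \<omega> + U \<omega>), Y \<omega>) \<in> E}
      = prob {\<omega>\<in>space M. (U \<omega>, Y \<omega>) \<in> E}" if [measurable]: "E \<in> sets (borel \<Otimes>\<^sub>M N)" for E
    using prob_lmod_dither_joint[of UNIV E] C by simp
  have "X -` A \<inter> space M = {\<omega>\<in>space M. X \<omega> \<in> A}" for X :: "'a \<Rightarrow> 'b" and A
    by auto
  then show ?thesis
    unfolding uniform_finite_rv_def indep_rvs_def
    using prob_T prob_dither prob_lmod_dither_joint by simp
qed

end

end

lemma borel_measurable_dither_sums:
  fixes Q :: "nat \<Rightarrow> 'a::euclidean_space \<Rightarrow> 'a"
  assumes "\<And>j. j \<in> I \<Longrightarrow> Q j \<in> borel_measurable borel" "\<And>j b. j \<in> I \<Longrightarrow> Some (j, b) \<in> B"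
  shows "(\<lambda>x. \<Sum>j\<in>I. x (Some (j, True)) - Q j (x (Some (j, True)) + x (Some (j, False))))
      \<in> borel_measurable (PiM B (\<lambda>_. borel))"
    "(\<lambda>x. \<Sum>j\<in>I. lmod (Q j) (x (Some (j, True)) + x (Some (j, False))))
      \<in> borel_measurable (PiM B (\<lambda>_. borel))"
  unfolding lmod_def using assms
  by (intro borel_measurable_sum borel_measurable_diff borel_measurable_add
      measurable_compose[OF _ assms(1)] measurable_component_singleton; simp)+

lemma (in prob_space) indep_first_user_rest:
  fixes W U :: "nat \<Rightarrow> 'a \<Rightarrow> 'b::euclidean_space" and Z :: "'a \<Rightarrow> 'b" and Q :: "nat \<Rightarrow> 'b \<Rightarrow> 'b"
  assumes indep: "indep_vars (\<lambda>_. borel) (\<lambda>j. case j of None \<Rightarrow> Z | Some (i, b) \<Rightarrow> (if b then W i else U i))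
      (insert None (Some ` ({1..K} \<times> UNIV)))"
    and K: "1 \<le> K" and Q: "\<And>j. j \<in> {2..K} \<Longrightarrow> Q j \<in> borel_measurable borel"
  shows "indep_rvs borel (W 1) (borel \<Otimes>\<^sub>M (borel \<Otimes>\<^sub>M borel)) (\<lambda>\<omega>. (U 1 \<omega>,
      \<Sum>j=2..K. W j \<omega> - Q j (W j \<omega> + U j \<omega>),
      c *\<^sub>R (\<Sum>j=2..K. lmod (Q j) (W j \<omega> + U j \<omega>)) + a *\<^sub>R Z \<omega>))"
    "indep_rvs borel (U 1) (borel \<Otimes>\<^sub>M borel) (\<lambda>\<omega>.
      (\<Sum>j=2..K. W j \<omega> - Q j (W j \<omega> + U j \<omega>),
       c *\<^sub>R (\<Sum>j=2..K. lmod (Q j) (W j \<omega> + U j \<omega>)) + a *\<^sub>R Z \<omega>))"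
proof -
  define X where "X = (\<lambda>j. case j of None \<Rightarrow> Z | Some (i, b) \<Rightarrow> (if b then W i else U i))"
  define R where "R = insert None (Some ` ({2..K} \<times> (UNIV :: bool set)))"
  define F where "F x = ((\<Sum>j=2..K. x (Some (j, True)) - Q j (x (Some (j, True)) + x (Some (j, False)))),
    c *\<^sub>R (\<Sum>j=2..K. lmod (Q j) (x (Some (j, True)) + x (Some (j, False)))) + a *\<^sub>R x None)"
    for x :: "(nat \<times> bool) option \<Rightarrow> 'b"
  have idx: "\<And>j b. j \<in> {2..K} \<Longrightarrow> Some (j, b) \<in> R" "None \<in> R"
    by (auto simp: R_def)
  note sums = borel_measurable_dither_sums[OF Q idx(1)]
  have F_meas: "F \<in> measurable (PiM R (\<lambda>_. borel)) (borel \<Otimes>\<^sub>M borel)"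
    unfolding F_def
    by (intro measurable_Pair borel_measurable_add borel_measurable_scaleR borel_measurable_const
        sums measurable_component_singleton[OF idx(2)])
  have F_X: "F (\<lambda>i\<in>R. X i \<omega>) = (\<Sum>j=2..K. W j \<omega> - Q j (W j \<omega> + U j \<omega>),
      c *\<^sub>R (\<Sum>j=2..K. lmod (Q j) (W j \<omega> + U j \<omega>)) + a *\<^sub>R Z \<omega>)" for \<omega>
    unfolding F_def R_def by (auto simp: X_def intro!: sum.cong)
  have "Some (1, True) \<in> insert None (Some ` ({1..K} \<times> UNIV))"
    "Some (1, False) \<in> insert None (Some ` ({1..K} \<times> UNIV))"
    "R \<subseteq> insert None (Some ` ({1..K} \<times> UNIV)) - {Some (1, True), Some (1, False)}"
    using K by (auto simp: R_def)
  from indep_vars_indep_rvs_two_and_rest[OF indep[folded X_def] this(1,2) _ this(3) F_meas]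
  show "indep_rvs borel (W 1) (borel \<Otimes>\<^sub>M (borel \<Otimes>\<^sub>M borel)) (\<lambda>\<omega>. (U 1 \<omega>,
      \<Sum>j=2..K. W j \<omega> - Q j (W j \<omega> + U j \<omega>),
      c *\<^sub>R (\<Sum>j=2..K. lmod (Q j) (W j \<omega> + U j \<omega>)) + a *\<^sub>R Z \<omega>))"
    "indep_rvs borel (U 1) (borel \<Otimes>\<^sub>M borel) (\<lambda>\<omega>.
      (\<Sum>j=2..K. W j \<omega> - Q j (W j \<omega> + U j \<omega>),
       c *\<^sub>R (\<Sum>j=2..K. lmod (Q j) (W j \<omega> + U j \<omega>)) + a *\<^sub>R Z \<omega>))"
    unfolding F_X by (simp_all add: X_def)
qed

theorem lemma2:
  fixes K :: nat
    and P :: "nat \<Rightarrow> real"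
    and L :: "nat \<Rightarrow> (real^'n) set" and Q :: "nat \<Rightarrow> real^'n \<Rightarrow> real^'n"
    and LC :: "(real^'n) set"
    and M :: "'w measure"
    and W U :: "nat \<Rightarrow> 'w \<Rightarrow> real^'n" and Z :: "'w \<Rightarrow> real^'n"
  assumes K: "K \<ge> 1"
    and P_mono: "\<And>i. 1 \<le> i \<Longrightarrow> i < K \<Longrightarrow> P i \<ge> P (Suc i)"
    and P_pos: "P K > 0"
    and lat: "\<And>i. 1 \<le> i \<Longrightarrow> i \<le> K \<Longrightarrow> lattice (L i)"
    and latC: "lattice LC"
    and nested: "\<And>i. 1 \<le> i \<Longrightarrow> i < K \<Longrightarrow> L i \<subseteq> L (Suc i)"
    and nestedC: "L K \<subseteq> LC"
    and quant: "\<And>i. 1 \<le> i \<Longrightarrow> i \<le> K \<Longrightarrow> nn_quantizer (L i) (Q i)"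
    and quant_meas: "\<And>i. 1 \<le> i \<Longrightarrow> i \<le> K \<Longrightarrow> Q i \<in> borel_measurable borel"
    and M: "prob_space M"
    and indep: "prob_space.indep_vars M (\<lambda>_. borel)
        (\<lambda>j. case j of None \<Rightarrow> Z | Some (i, b) \<Rightarrow> (if b then W i else U i))
        (insert None (Some ` ({1..K} \<times> UNIV)))"
    and W_unif: "\<And>i. 1 \<le> i \<Longrightarrow> i \<le> K \<Longrightarrow> uniform_finite_rv M (W i) (LC \<inter> voronoi (Q i))"
    and U_unif: "\<And>i. 1 \<le> i \<Longrightarrow> i \<le> K \<Longrightarrow>
        distr M lborel (U i) = uniform_measure lborel (voronoi (Q i))"
    and Z_gauss: "distr M lborel Z = density lborel std_gauss_density"
  shows "uniform_finite_rv M
           (\<lambda>\<omega>. lmod (Q 1) (\<Sum>j=1..K. W j \<omega> - Q j (W j \<omega> + U j \<omega>)))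
           (LC \<inter> voronoi (Q 1))
       \<and> prob_space.indep_var M
           borel (\<lambda>\<omega>. lmod (Q 1) (\<Sum>j=1..K. W j \<omega> - Q j (W j \<omega> + U j \<omega>)))
           borel (\<lambda>\<omega>. let \<alpha> = (\<Sum>j=1..K. P j) / ((\<Sum>j=1..K. P j) + 1) in
                      (- (1 - \<alpha>)) *\<^sub>R (\<Sum>j=1..K. lmod (Q j) (W j \<omega> + U j \<omega>)) + \<alpha> *\<^sub>R Z \<omega>)"
proof -
  interpret prob_space M by (rule M)
  define \<alpha> where "\<alpha> = (\<Sum>j=1..K. P j) / ((\<Sum>j=1..K. P j) + 1)"
  define V where "V \<omega> = (\<Sum>j=2..K. W j \<omega> - Q j (W j \<omega> + U j \<omega>))" for \<omega>
  define Y where "Y \<omega> = (- (1 - \<alpha>)) *\<^sub>R (\<Sum>j=2..K. lmod (Q j) (W j \<omega> + U j \<omega>)) + \<alpha> *\<^sub>R Z \<omega>" for \<omega>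
  have "Q j \<in> borel_measurable borel" if "j \<in> {2..K}" for j
    using that by (intro quant_meas) auto
  note others_indep = indep_first_user_rest[where Q=Q and c="- (1 - \<alpha>)" and a=\<alpha>, OF indep K this, folded V_def Y_def]
  have L_LC: "L j \<subseteq> LC" if "1 \<le> j" "j \<le> K" for j
    using subset_chain_le[of K L, OF nested that] nestedC by blast
  have V_LC: "AE \<omega> in M. V \<omega> \<in> LC"
    unfolding V_def
  proof (rule AE_sum_in_lattice[OF latC finite_atLeastAtMost])
    fix j assume j: "j \<in> {2..K}"
    have Q_LC: "Q j x \<in> LC" for x
      using j nn_quantizer_in[OF quant] L_LC[of j] by auto
    have "AE \<omega> in M. W j \<omega> \<in> LC \<inter> voronoi (Q j)"
      using j by (intro uniform_finite_rv_support(3) W_unif) auto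
    then show "AE \<omega> in M. W j \<omega> - Q j (W j \<omega> + U j \<omega>) \<in> LC"
      by eventually_elim (auto intro: lattice_diff[OF latC] Q_LC)
  qed
  note Q1 = quant[OF order_refl K] quant_meas[OF order_refl K] lat[OF order_refl K]
  have dither: "uniform_finite_rv M (\<lambda>\<omega>. lmod (Q 1) (W 1 \<omega> + V \<omega>)) (LC \<inter> voronoi (Q 1)) \<and>
      indep_rvs borel (\<lambda>\<omega>. lmod (Q 1) (W 1 \<omega> + V \<omega>))
        (borel \<Otimes>\<^sub>M borel) (\<lambda>\<omega>. (lmod (Q 1) (W 1 \<omega> + U 1 \<omega>), Y \<omega>))"
    using K by (intro lmod_dither_uniform_indep[OF Q1 latC L_LC _ _ others_indep V_LC] W_unif U_unif) auto
  have T_eq: "(\<lambda>\<omega>. lmod (Q 1) (\<Sum>j=1..K. W j \<omega> - Q j (W j \<omega> + U j \<omega>)))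
      = (\<lambda>\<omega>. lmod (Q 1) (W 1 \<omega> + V \<omega>))"
    unfolding V_def by (rule ext) (rule lmod_sum_first[where Q=Q, OF Q1(1) K])
  define \<phi> where "\<phi> p = (- (1 - \<alpha>)) *\<^sub>R fst p + snd p" for p :: "(real^'n) \<times> (real^'n)"
  have Z_eq: "(\<lambda>\<omega>. let \<alpha> = (\<Sum>j=1..K. P j) / ((\<Sum>j=1..K. P j) + 1) in
        (- (1 - \<alpha>)) *\<^sub>R (\<Sum>j=1..K. lmod (Q j) (W j \<omega> + U j \<omega>)) + \<alpha> *\<^sub>R Z \<omega>)
      = (\<lambda>\<omega>. \<phi> (lmod (Q 1) (W 1 \<omega> + U 1 \<omega>), Y \<omega>))"
  proof -
    have "(\<Sum>j=1..K. lmod (Q j) (W j \<omega> + U j \<omega>))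
        = lmod (Q 1) (W 1 \<omega> + U 1 \<omega>) + (\<Sum>j=2..K. lmod (Q j) (W j \<omega> + U j \<omega>))" for \<omega>
      by (rule sum_atLeast1_split[OF K])
    then show ?thesis
      unfolding Let_def \<alpha>_def[symmetric] Y_def \<phi>_def by (simp add: scaleR_add_right add.assoc)
  qed
  have "\<phi> \<in> borel_measurable (borel \<Otimes>\<^sub>M borel)"
    unfolding \<phi>_def
    by (intro borel_measurable_add borel_measurable_scaleR borel_measurable_const measurable_fst measurable_snd)
  from indep_rvs_compose[OF conjunct2[OF dither] measurable_ident_sets[OF refl] this]
  have "indep_rvs borel (\<lambda>\<omega>. lmod (Q 1) (W 1 \<omega> + V \<omega>))
      borel (\<lambda>\<omega>. \<phi> (lmod (Q 1) (W 1 \<omega> + U 1 \<omega>), Y \<omega>))"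
    by simp
  then show ?thesis
    unfolding T_eq Z_eq indep_var_iff_indep_rvs using conjunct1[OF dither] by blast
qed

end
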